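(* For $j\in\omega$ let $X_j=\{v_{j,s}: s\in 2^j\}$ (distinct new points indexed by binary strings of length $j$, the sets $X_j$ pairwise disjoint), and for $n\in\omega$ let $H_n$ be the tournament with domain $\bigcup_{j<n}X_j$ (so $|H_n|=2^n-1$) with orientation: for $j>i$, $v_{j,s}\to v_{i,t}$ iff $s(i)=1$ (and otherwise $v_{i,t}\to v_{j,s}$); within a level, $v_{j,s}\to v_{j,t}$ iff $s<_{\mathrm{lex}}t$. Then for every $n\ge1$, $\mathsf{rk}(H_n)=n$.
   Context: A tournament is a structure $(T,\to)$ such that for any two distinct $u,v$ exactly one of $u\to v$, $v\to u$ holds. Let $\mathcal F$ be the class of finite tournaments. Substructures are induced sub-tournaments and $\mathsf{age}(X)$ is the set of finite sub-tournaments of $X$. For $A\le B$, $B$ is a prime extension of $A$ if $|B\setminus A|=1$; a realization of $B$ in $X$ (where $A\le X$) is $C\le X$ with $A\le C$ and an isomorphism $B\to C$ fixing $A$ pointwise. For $F\in\mathsf{age}(X)$ define by recursion: $\mathsf{rk}_X(F)\ge0$ always; $\mathsf{rk}_X(F)\ge\alpha+1$ iff every prime extension $B\in\mathcal F$ of $F$ has a realization $C$ in $X$ with $\mathsf{rk}_X(C)\ge\alpha$; for limit $\alpha$, $\mathsf{rk}_X(F)\ge\alpha$ iff $\mathsf{rk}_X(F)\ge\beta$ for all $\beta<\alpha$. $\mathsf{rk}_X(F)=\sup\{\alpha:\mathsf{rk}_X(F)\ge\alpha\}$ (or $\infty$), and $\mathsf{rk}(X)=\mathsf{rk}_X(\emptyset)$.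 $<_{\mathrm{lex}}$ is the lexicographic order on binary strings of equal length. *)

theory Defs
  imports Main
begin

text \<open>A (relational) structure is a carrier set V with a binary relation E;
  only the values of E on V matter. Substructures are induced, so a
  substructure of (V,E) is identified with a subset of V.\<close>

definition tournament :: "'a set \<Rightarrow> ('a \<Rightarrow> 'a \<Rightarrow> bool) \<Rightarrow> bool" where
  "tournament V E \<longleftrightarrow>
     (\<forall>u\<in>V. \<not> E u u) \<and> (\<forall>u\<in>V. \<forall>v\<in>V. u \<noteq> v \<longrightarrow> (E u v \<longleftrightarrow> \<not> E v u))"

definition age :: "'a set \<Rightarrow> 'a set set" where
  "age V = {F. F \<subseteq> V \<and> finite F}"

text \<open>A prime extension (W,R) of the finite tournament F (with relation E):
  a finite tournament whose carrier lives in 'a option, containing a copy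
  Some ` F of F as induced substructure, with exactly one additional point.
  Every prime extension in the class of finite tournaments is isomorphic over F
  to one of this form.\<close>
definition prime_ext :: "'a set \<Rightarrow> ('a \<Rightarrow> 'a \<Rightarrow> bool) \<Rightarrow> 'a option set \<Rightarrow>
    ('a option \<Rightarrow> 'a option \<Rightarrow> bool) \<Rightarrow> bool" where
  "prime_ext F E W R \<longleftrightarrow> finite W \<and> tournament W R \<and> Some ` F \<subseteq> W \<and>
     (\<forall>a\<in>F. \<forall>b\<in>F. R (Some a) (Some b) \<longleftrightarrow> E a b) \<and>
     card (W - Some ` F) = 1"

definition realization :: "'a set \<Rightarrow> ('a \<Rightarrow> 'a \<Rightarrow> bool) \<Rightarrow> 'a set \<Rightarrow> 'a option set \<Rightarrow>
    ('a option \<Rightarrow> 'a option \<Rightarrow> bool) \<Rightarrow> 'a set \<Rightarrow> bool" where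
  "realization V E F W R C \<longleftrightarrow> C \<subseteq> V \<and> F \<subseteq> C \<and>
     (\<exists>f. bij_betw f W C \<and> (\<forall>a\<in>F. f (Some a) = a) \<and>
          (\<forall>x\<in>W. \<forall>y\<in>W. R x y \<longleftrightarrow> E (f x) (f y)))"

text \<open>rk_ge V E F k means rk_X(F) \<ge> k for finite ordinals k (X = (V,E)).\<close>
fun rk_ge :: "'a set \<Rightarrow> ('a \<Rightarrow> 'a \<Rightarrow> bool) \<Rightarrow> 'a set \<Rightarrow> nat \<Rightarrow> bool" where
  "rk_ge V E F 0 = True"
| "rk_ge V E F (Suc k) =
     (\<forall>W R. prime_ext F E W R \<longrightarrow>
        (\<exists>C. realization V E F W R C \<and> C \<in> age V \<and> rk_ge V E C k))"

text \<open>rk(X) = n for a natural number n: rk_X(\<emptyset>) \<ge> n but not \<ge> n+1.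
  (For finite n this is equivalent to the ordinal-valued definition, since
  the class of \<alpha> with rk \<ge> \<alpha> is downward closed.)\<close>
definition rank_eq :: "'a set \<Rightarrow> ('a \<Rightarrow> 'a \<Rightarrow> bool) \<Rightarrow> nat \<Rightarrow> bool" where
  "rank_eq V E n \<longleftrightarrow> rk_ge V E {} n \<and> \<not> rk_ge V E {} (Suc n)"

definition lex_less :: "bool list \<Rightarrow> bool list \<Rightarrow> bool" where
  "lex_less s t \<longleftrightarrow> length s = length t \<and>
     (\<exists>k < length s. take k s = take k t \<and> \<not> s ! k \<and> t ! k)"

text \<open>The vertex v_{j,s} is represented by the string s (with j = length s).\<close>
definition H_vert :: "nat \<Rightarrow> bool list set" where
  "H_vert n = {s. length s < n}"

definition H_edge :: "bool list \<Rightarrow> bool list \<Rightarrow> bool" where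
  "H_edge s t =
     (if length t < length s then s ! length t
      else if length s < length t then \<not> t ! length s
      else lex_less s t)"

end

theory Submission
  imports Defs
begin

text \<open>
  Lower bound: if a finite F \<subseteq> H_n has exactly one vertex on each of the levels 0, ..., k-1,
  then any one-point extension of F is realized by a vertex on level k, namely the one whose
  string records in its i-th bit whether the new point beats the vertex of F on level i.
  The enlarged set again has one vertex per level, so this can be repeated until level n-1.

  Upper bound: in any finite tournament X, rk(F) \<ge> 1 means that every subset of F occurs as
  the out-neighbourhood in F of some vertex outside F, so |X| \<ge> 2^|F| + |F|. If
  rk(X) \<ge> n + 1, realizing n successive one-point extensions of the empty set yields a set
  of size n and rank \<ge> 1, hence |X| \<ge> 2^n + n, whereas |H_n| = 2^n - 1.
\<close>

lemma tournament_asym: "tournament V E \<Longrightarrow> u \<in> V \<Longrightarrow> v \<in> V \<Longrightarrow> E u v \<Longrightarrow> \<not> E v u"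
  unfolding tournament_def by metis

lemma tournament_total:
  "tournament V E \<Longrightarrow> u \<in> V \<Longrightarrow> v \<in> V \<Longrightarrow> u \<noteq> v \<Longrightarrow> E u v \<or> E v u"
  unfolding tournament_def by blast

lemma tournament_subset: "tournament V E \<Longrightarrow> F \<subseteq> V \<Longrightarrow> tournament F E"
  unfolding tournament_def by blast

fun point_ext :: "('a \<Rightarrow> 'a \<Rightarrow> bool) \<Rightarrow> 'a set \<Rightarrow> 'a option \<Rightarrow> 'a option \<Rightarrow> bool" where
  "point_ext E P (Some a) (Some b) = E a b"
| "point_ext E P (Some a) None = (a \<notin> P)"
| "point_ext E P None (Some b) = (b \<in> P)"
| "point_ext E P None None = False"

lemma prime_ext_point_ext:
  assumes "finite F" "tournament F E"
  shows "prime_ext F E (insert None (Some ` F)) (point_ext E P)"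
proof -
  have "insert None (Some ` F) - Some ` F = {None}" by auto
  moreover have "tournament (insert None (Some ` F)) (point_ext E P)"
    unfolding tournament_def using assms(2)
    by (auto dest: tournament_asym tournament_total)
  ultimately show ?thesis
    unfolding prime_ext_def using assms(1) by auto
qed

lemma realization_point_ext_outside:
  assumes "realization V E F (insert None (Some ` F)) (point_ext E P) C"
  shows "\<exists>v \<in> C - F. \<forall>a\<in>F. E v a \<longleftrightarrow> a \<in> P"
proof -
  obtain f where f: "bij_betw f (insert None (Some ` F)) C" "\<forall>a\<in>F. f (Some a) = a"
      "\<forall>x\<in>insert None (Some ` F). \<forall>y\<in>insert None (Some ` F).
         point_ext E P x y \<longleftrightarrow> E (f x) (f y)"
    using assms unfolding realization_def by blast
  have "f None \<in> C" using f(1) bij_betwE by blast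
  moreover have "f None \<notin> F"
  proof
    assume "f None \<in> F"
    then have "f None = f (Some (f None))" using f(2) by simp
    then show False using f(1) \<open>f None \<in> F\<close> unfolding bij_betw_def inj_on_def by blast
  qed
  moreover have "\<forall>a\<in>F. E (f None) a \<longleftrightarrow> a \<in> P"
    using f(2,3) by force
  ultimately show ?thesis by blast
qed

lemma realization_insert:
  assumes tV: "tournament V E" and pe: "prime_ext F E W R" and "F \<subseteq> V"
    and w: "w \<in> W - Some ` F" and v: "v \<in> V - F"
    and out: "\<And>a. a \<in> F \<Longrightarrow> R w (Some a) \<longleftrightarrow> E v a"
  shows "realization V E F W R (insert v F)"
proof -
  have tW: "tournament W R" and RE: "\<forall>a\<in>F. \<forall>b\<in>F. R (Some a) (Some b) \<longleftrightarrow> E a b"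
    using pe unfolding prime_ext_def by auto
  have "W - Some ` F = {w}"
    using pe w unfolding prime_ext_def by (metis card_1_singletonE singletonD)
  then have W: "W = insert w (Some ` F)"
    using pe unfolding prime_ext_def by blast
  define f where "f x = (if x = w then v else the x)" for x
  have bij: "bij_betw f W (insert v F)"
    by (rule bij_betw_byWitness[where f' = "\<lambda>a. if a = v then w else Some a"])
      (use W w v in \<open>auto simp: f_def\<close>)
  have f_Some: "\<forall>a\<in>F. f (Some a) = a"
    using w by (auto simp: f_def)
  have edges: "\<forall>x\<in>W. \<forall>y\<in>W. R x y \<longleftrightarrow> E (f x) (f y)"
  proof (intro ballI)
    fix x y assume "x \<in> W" "y \<in> W"
    have "\<not> R w w" "\<not> E v v" using tW tV w v unfolding tournament_def by auto
    moreover have "R (Some a) w \<longleftrightarrow> E a v" if "a \<in> F" for a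
    proof -
      have "R (Some a) w \<longleftrightarrow> \<not> R w (Some a)"
        using tW w \<open>a \<in> F\<close> W unfolding tournament_def by blast
      also have "\<dots> \<longleftrightarrow> E a v"
        using tV out[OF \<open>a \<in> F\<close>] v \<open>a \<in> F\<close> \<open>F \<subseteq> V\<close> unfolding tournament_def by auto
      finally show ?thesis .
    qed
    ultimately show "R x y \<longleftrightarrow> E (f x) (f y)"
      using \<open>x \<in> W\<close> \<open>y \<in> W\<close> W RE out f_Some by (auto simp: f_def)
  qed
  have "insert v F \<subseteq> V" using v \<open>F \<subseteq> V\<close> by blast
  then show ?thesis
    unfolding realization_def using bij f_Some edges by blast
qed

lemma rk_ge_SucE:
  assumes "rk_ge V E F (Suc k)" "prime_ext F E W R"
  obtains C where "realization V E F W R C" "C \<in> age V" "rk_ge V E C k"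
  using assms by auto

lemma two_pow_card_le_card_Diff:
  assumes "finite V" "tournament V E" "F \<subseteq> V" "rk_ge V E F (Suc k)"
  shows "2 ^ card F \<le> card (V - F)"
proof -
  have "finite F" using assms(1,3) finite_subset by blast
  have "tournament F E" using assms(2,3) by (rule tournament_subset)
  have "Pow F \<subseteq> (\<lambda>v. {a\<in>F. E v a}) ` (V - F)"
  proof
    fix P assume "P \<in> Pow F"
    obtain C where "realization V E F (insert None (Some ` F)) (point_ext E P) C"
      using rk_ge_SucE[OF assms(4) prime_ext_point_ext[OF \<open>finite F\<close> \<open>tournament F E\<close>]] .
    moreover from this obtain v where "v \<in> C - F" "\<forall>a\<in>F. E v a \<longleftrightarrow> a \<in> P"
      by (blast dest: realization_point_ext_outside)
    ultimately have "v \<in> V - F" and "P = {a\<in>F. E v a}"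
      using \<open>P \<in> Pow F\<close> unfolding realization_def by auto
    then show "P \<in> (\<lambda>v. {a\<in>F. E v a}) ` (V - F)" by blast
  qed
  then have "card (Pow F) \<le> card ((\<lambda>v. {a\<in>F. E v a}) ` (V - F))"
    using assms(1) by (intro card_mono) auto
  also have "\<dots> \<le> card (V - F)"
    using assms(1) by (intro card_image_le) auto
  finally show ?thesis
    using \<open>finite F\<close> by (simp add: card_Pow)
qed

lemma rk_ge_Suc_extend:
  assumes "finite V" "tournament V E" "F \<subseteq> V" "rk_ge V E F (Suc k)"
  obtains C where "C \<subseteq> V" "card C = Suc (card F)" "rk_ge V E C k"
proof -
  have "finite F" using assms(1,3) finite_subset by blast
  have "tournament F E" using assms(2,3) by (rule tournament_subset)
  obtain C where C: "realization V E F (insert None (Some ` F)) (point_ext E {}) C"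
      "C \<in> age V" "rk_ge V E C k"
    using rk_ge_SucE[OF assms(4) prime_ext_point_ext[OF \<open>finite F\<close> \<open>tournament F E\<close>]] .
  then obtain f where "bij_betw f (insert None (Some ` F)) C"
    unfolding realization_def by blast
  then have "card C = card (insert None (Some ` F))"
    by (simp add: bij_betw_same_card)
  also have "\<dots> = Suc (card F)"
    using \<open>finite F\<close> by (simp add: card_image)
  finally show ?thesis
    using that C(2,3) unfolding age_def by blast
qed

lemma rk_ge_add_extend:
  assumes "finite V" "tournament V E"
  shows "F \<subseteq> V \<Longrightarrow> rk_ge V E F (m + k) \<Longrightarrow> \<exists>C \<subseteq> V. card C = card F + m \<and> rk_ge V E C k"
proof (induction m arbitrary: F)
  case 0
  then show ?case by auto
next
  case (Suc m)
  obtain C where "C \<subseteq> V" "card C = Suc (card F)" "rk_ge V E C (m + k)"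
    using rk_ge_Suc_extend[OF assms Suc.prems(1)] Suc.prems(2) by auto
  with Suc.IH[of C] obtain D where "D \<subseteq> V" "card D = card C + m" "rk_ge V E D k"
    by blast
  with \<open>card C = Suc (card F)\<close> show ?case by auto
qed

lemma rk_ge_Suc_card_bound:
  assumes "finite V" "tournament V E" "F \<subseteq> V" "rk_ge V E F (Suc m)"
  shows "2 ^ (card F + m) + (card F + m) \<le> card V"
proof -
  obtain C where C: "C \<subseteq> V" "card C = card F + m" "rk_ge V E C (Suc 0)"
    using rk_ge_add_extend[OF assms(1,2,3), of m "Suc 0"] assms(4) by auto
  have "2 ^ card C \<le> card (V - C)"
    using two_pow_card_le_card_Diff[OF assms(1,2) C(1,3)] .
  moreover have "finite C" using C(1) assms(1) finite_subset by blast
  then have "card (V - C) = card V - card C" and "card C \<le> card V"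
    using C(1) assms(1) by (simp_all add: card_Diff_subset card_mono)
  ultimately show ?thesis
    unfolding C(2)[symmetric] by linarith
qed

lemma lex_less_irrefl: "\<not> lex_less s s"
  unfolding lex_less_def by auto

lemma lex_less_total:
  assumes "length s = length t" "s \<noteq> t"
  shows "lex_less s t \<or> lex_less t s"
proof -
  have ex: "\<exists>k. k < length s \<and> s ! k \<noteq> t ! k"
    using assms nth_equalityI by blast
  define k where "k = (LEAST k. k < length s \<and> s ! k \<noteq> t ! k)"
  have k: "k < length s" "s ! k \<noteq> t ! k"
    using LeastI_ex[OF ex] unfolding k_def by auto
  have lt: "\<And>i. i < k \<Longrightarrow> s ! i = t ! i"
    using not_less_Least k(1) unfolding k_def by fastforce
  have tk: "take k s = take k t"
    by (rule nth_equalityI) (use assms k lt in auto)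
  show ?thesis
    using k tk assms(1) unfolding lex_less_def by (cases "s ! k") auto
qed

lemma lex_less_asym:
  assumes "lex_less s t" shows "\<not> lex_less t s"
proof
  assume b: "lex_less t s"
  obtain k1 where k1: "k1 < length s" "take k1 s = take k1 t" "\<not> s ! k1" "t ! k1"
    using assms unfolding lex_less_def by auto
  obtain k2 where k2: "k2 < length t" "take k2 t = take k2 s" "\<not> t ! k2" "s ! k2"
    using b unfolding lex_less_def by auto
  have "length s = length t" using assms unfolding lex_less_def by auto
  show False
  proof (cases k1 k2 rule: linorder_cases)
    case less
    have "take k2 s ! k1 = take k2 t ! k1" using k2(2) by (simp only:)
    then have "s ! k1 = t ! k1" using less by (simp only: nth_take)
    then show False using k1(3,4) by blast
  next
    case equal then show False using k1(3,4) k2(3,4) by blast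
  next
    case greater
    have "take k1 s ! k2 = take k1 t ! k2" using k1(2) by (simp only:)
    then have "s ! k2 = t ! k2" using greater by (simp only: nth_take)
    then show False using k2(3,4) by blast
  qed
qed

lemma tournament_H_edge: "tournament V H_edge"
  unfolding tournament_def
proof (intro conjI ballI impI)
  fix u show "\<not> H_edge u u" by (simp add: H_edge_def lex_less_irrefl)
next
  fix u v :: "bool list" assume "u \<noteq> v"
  then show "H_edge u v = (\<not> H_edge v u)"
    unfolding H_edge_def using lex_less_total lex_less_asym by auto
qed

lemma finite_H_vert: "finite (H_vert n)"
  unfolding H_vert_def
  by (rule finite_subset[OF _ finite_lists_length_le[of "UNIV :: bool set" n]]) auto

lemma card_H_vert: "card (H_vert n) = 2 ^ n - 1"
proof (induction n)
  case 0
  then show ?case by (simp add: H_vert_def)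
next
  case (Suc n)
  let ?level = "{s :: bool list. set s \<subseteq> UNIV \<and> length s = n}"
  have "H_vert (Suc n) = H_vert n \<union> ?level" and "H_vert n \<inter> ?level = {}"
    unfolding H_vert_def by auto
  moreover have "finite (H_vert n)" by (rule finite_H_vert)
  moreover have "finite ?level" "card ?level = 2 ^ n"
    using finite_lists_length_eq[of "UNIV :: bool set" n] card_lists_length_eq[of "UNIV :: bool set" n]
    by simp_all
  ultimately have "card (H_vert (Suc n)) = (2 ^ n - 1) + 2 ^ n"
    using Suc.IH by (simp add: card_Un_disjoint)
  then show ?case by simp
qed

lemma rk_ge_H_vert_levels:
  "bij_betw length F {..<k} \<Longrightarrow> k + m \<le> n \<Longrightarrow> rk_ge (H_vert n) H_edge F m"
proof (induction m arbitrary: F k)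
  case 0
  then show ?case by simp
next
  case (Suc m)
  have length_F: "a \<in> F \<Longrightarrow> length a < k" for a
    using Suc.prems(1) bij_betwE by fastforce
  have F_sub: "F \<subseteq> H_vert n"
    using length_F Suc.prems(2) unfolding H_vert_def by fastforce
  show ?case
    unfolding rk_ge.simps
  proof (intro allI impI)
    fix W R assume pe: "prime_ext F H_edge W R"
    obtain w where w: "w \<in> W - Some ` F"
      using pe unfolding prime_ext_def by (metis card_1_singletonE singletonI)
    define v where "v = map (\<lambda>i. R w (Some (inv_into F length i))) [0..<k]"
    have length_v: "length v = k" unfolding v_def by simp
    have v_bit: "v ! length a = R w (Some a)" if "a \<in> F" for a
      using length_F[OF that] bij_betw_inv_into_left[OF Suc.prems(1) that]
      unfolding v_def by simp
    have v: "v \<in> H_vert n - F"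
      using length_v length_F Suc.prems(2) unfolding H_vert_def by fastforce
    have "R w (Some a) \<longleftrightarrow> H_edge v a" if "a \<in> F" for a
      using v_bit[OF that] length_F[OF that] length_v by (simp add: H_edge_def)
    then have "realization (H_vert n) H_edge F W R (insert v F)"
      by (rule realization_insert[OF tournament_H_edge pe F_sub w v])
    moreover have "insert v F \<in> age (H_vert n)"
      using F_sub v bij_betw_finite[OF Suc.prems(1)] unfolding age_def by auto
    moreover have "bij_betw length (insert v F) {..<Suc k}"
      using notIn_Un_bij_betw[of v F length "{..<k}"] Suc.prems(1) v length_v
      by (simp add: lessThan_Suc)
    then have "rk_ge (H_vert n) H_edge (insert v F) m"
      using Suc.IH Suc.prems(2) by simp
    ultimately show "\<exists>C. realization (H_vert n) H_edge F W R C \<and> C \<in> age (H_vert n) \<and>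
        rk_ge (H_vert n) H_edge C m"
      by blast
  qed
qed

theorem theorem5p3:
  fixes n :: nat
  assumes "n \<ge> 1"
  shows "rank_eq (H_vert n) H_edge n"
  unfolding rank_eq_def
proof
  show "rk_ge (H_vert n) H_edge {} n"
    by (rule rk_ge_H_vert_levels[where k = 0]) (simp_all add: bij_betw_def)
  show "\<not> rk_ge (H_vert n) H_edge {} (Suc n)"
  proof
    assume "rk_ge (H_vert n) H_edge {} (Suc n)"
    then have "2 ^ n + n \<le> card (H_vert n)"
      using rk_ge_Suc_card_bound[OF finite_H_vert tournament_H_edge empty_subsetI] by simp
    moreover have "(0::nat) < 2 ^ n" by simp
    ultimately show False
      using card_H_vert[of n] by linarith
  qed
qed

end
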